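(* Let $I_2^P\subset\mathbb C[d,\bar k,l,r,\bar t,\bar x]$ be the ideal generated by $b^P=\sum_{i=1}^3(P_0x_i-P_i)^2-d^2P_0^2$, $\nu_{(i,j)}^P=n_i(P_0x_j-P_j)-n_j(P_0x_i-P_i)$ for $1\le i<j\le3$, $w^P=rP_0\beta h-1$, and $\ell_i=x_i-k_il$ for $i=1,2,3$. Then $s_0,s_1,s_2,s_3\in I_2^P\cap\mathbb C[d,\bar k,\bar t]$. Consequently, if $(l^o,r^o,\bar t^o,\bar x^o)$ is a solution of these eight equations with $(d,\bar k)=(d^o,\bar k^o)$, then $s_1=s_2=s_3=0$ at $(d^o,\bar k^o,\bar t^o)$.
   Context: $P=(P_1/P_0,P_2/P_0,P_3/P_0)$ with $P_i\in\mathbb C[t_1,t_2]$, $\gcd(P_0,\dots,P_3)=1$, is a rational parametrization of a surface $\Sigma$ defined by an irreducible $f\in\mathbb C[y_1,y_2,y_3]$. $n_i=A_i/\gcd(A_1,A_2,A_3)$ where $\frac{\partial P}{\partial t_1}\wedge\frac{\partial P}{\partial t_2}=(A_1,A_2,A_3)/A_0$ (cross product); $h=n_1^2+n_2^2+n_3^2$; $\beta\in\mathbb C[\bar t]$ is a nonzero polynomial with $\gcd(\beta,P_0)=1$ and $f_i(P)=\beta P_0^{-\mu}n_i$ for some $\mu\in\mathbb N$. $\bar k=(k_1,k_2,k_3)$, $d,l,r$ are variables. $s_0=k_1(P_2n_3-P_3n_2)-k_2(P_1n_3-P_3n_1)+k_3(P_1n_2-P_2n_1)$; $s_1=h(k_2P_3-k_3P_2)^2-d^2P_0^2(k_2n_3-k_3n_2)^2$;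 $s_2=h(k_1P_3-k_3P_1)^2-d^2P_0^2(k_1n_3-k_3n_1)^2$; $s_3=h(k_1P_2-k_2P_1)^2-d^2P_0^2(k_1n_2-k_2n_1)^2$. *)

theory Defs
  imports "HOL-Analysis.Analysis"
begin

text \<open>Multivariate polynomials over the complex numbers are represented as polynomial
  functions (the complex field is infinite, so polynomial functions and polynomials coincide).
  Polynomials in the t-variables (the P_i, n_i, beta, h) and in the y-variables (f; we reuse
  the names x1,x2,x3 for y1,y2,y3) are elements of this ring depending only on those variables.\<close>

datatype var = Vd | Vk1 | Vk2 | Vk3 | Vl | Vr | Vt1 | Vt2 | Vx1 | Vx2 | Vx3

type_synonym pf = "(var \<Rightarrow> complex) \<Rightarrow> complex"

inductive_set mpoly :: "pf set" where
  mp_const: "(\<lambda>_. c) \<in> mpoly"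
| mp_var: "(\<lambda>a. a v) \<in> mpoly"
| mp_add: "p \<in> mpoly \<Longrightarrow> q \<in> mpoly \<Longrightarrow> (\<lambda>a. p a + q a) \<in> mpoly"
| mp_mult: "p \<in> mpoly \<Longrightarrow> q \<in> mpoly \<Longrightarrow> (\<lambda>a. p a * q a) \<in> mpoly"

definition depends_only :: "var set \<Rightarrow> pf \<Rightarrow> bool" where
  "depends_only V p \<longleftrightarrow> (\<forall>a b. (\<forall>v\<in>V. a v = b v) \<longrightarrow> p a = p b)"

definition in_subring :: "var set \<Rightarrow> pf \<Rightarrow> bool" where
  "in_subring V p \<longleftrightarrow> p \<in> mpoly \<and> depends_only V p"

definition tvars :: "var set" where "tvars = {Vt1, Vt2}"
definition yvars :: "var set" where "yvars = {Vx1, Vx2, Vx3}"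

definition ideal_gen :: "pf list \<Rightarrow> pf set" where
  "ideal_gen G = {p. \<exists>cs. length cs = length G \<and> set cs \<subseteq> mpoly \<and>
      p = (\<lambda>a. \<Sum>i<length G. (cs ! i) a * (G ! i) a)}"

definition pdvd :: "pf \<Rightarrow> pf \<Rightarrow> bool" where
  "pdvd q p \<longleftrightarrow> (\<exists>c\<in>mpoly. p = (\<lambda>a. q a * c a))"

definition is_const :: "pf \<Rightarrow> bool" where
  "is_const p \<longleftrightarrow> (\<exists>c. p = (\<lambda>_. c))"

definition coprime_family :: "pf set \<Rightarrow> bool" where
  "coprime_family F \<longleftrightarrow> (\<forall>q\<in>mpoly. (\<forall>p\<in>F. pdvd q p) \<longrightarrow> (\<exists>c. c \<noteq> 0 \<and> q = (\<lambda>_. c)))"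

definition is_gcd :: "pf \<Rightarrow> pf set \<Rightarrow> bool" where
  "is_gcd g F \<longleftrightarrow> g \<in> mpoly \<and> (\<forall>p\<in>F. pdvd g p) \<and> (\<forall>q\<in>mpoly. (\<forall>p\<in>F. pdvd q p) \<longrightarrow> pdvd q g)"

definition irreducible_poly :: "pf \<Rightarrow> bool" where
  "irreducible_poly f \<longleftrightarrow> f \<in> mpoly \<and> \<not> is_const f \<and>
     (\<forall>a\<in>mpoly. \<forall>b\<in>mpoly. f = (\<lambda>z. a z * b z) \<longrightarrow> is_const a \<or> is_const b)"

definition pd :: "var \<Rightarrow> pf \<Rightarrow> pf" where
  "pd v F = (\<lambda>a. deriv (\<lambda>s. F (a(v := s))) (a v))"

definition xv :: "nat \<Rightarrow> var" where
  "xv i = (if i = 1 then Vx1 else if i = 2 then Vx2 else Vx3)"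
definition kv :: "nat \<Rightarrow> var" where
  "kv i = (if i = 1 then Vk1 else if i = 2 then Vk2 else Vk3)"
definition tv :: "nat \<Rightarrow> var" where
  "tv j = (if j = 1 then Vt1 else Vt2)"

definition at_P :: "(nat \<Rightarrow> pf) \<Rightarrow> (var \<Rightarrow> complex) \<Rightarrow> (var \<Rightarrow> complex)" where
  "at_P P a = a(Vx1 := P 1 a / P 0 a, Vx2 := P 2 a / P 0 a, Vx3 := P 3 a / P 0 a)"

text \<open>P0^2 * d(P_i/P0)/dt_j\<close>
definition Qd :: "(nat \<Rightarrow> pf) \<Rightarrow> nat \<Rightarrow> nat \<Rightarrow> pf" where
  "Qd P j i = (\<lambda>a. pd (tv j) (P i) a * P 0 a - P i a * pd (tv j) (P 0) a)"

text \<open>P0^4 times the cross product (dP/dt1) x (dP/dt2).\<close>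
definition crossQ :: "(nat \<Rightarrow> pf) \<Rightarrow> nat \<Rightarrow> pf" where
  "crossQ P i = (\<lambda>a.
     if i = 1 then Qd P 1 2 a * Qd P 2 3 a - Qd P 1 3 a * Qd P 2 2 a
     else if i = 2 then Qd P 1 3 a * Qd P 2 1 a - Qd P 1 1 a * Qd P 2 3 a
     else Qd P 1 1 a * Qd P 2 2 a - Qd P 1 2 a * Qd P 2 1 a)"

definition setting :: "pf \<Rightarrow> (nat \<Rightarrow> pf) \<Rightarrow> (nat \<Rightarrow> pf) \<Rightarrow> pf \<Rightarrow> nat \<Rightarrow> bool" where
  "setting f P n \<beta> \<mu> \<longleftrightarrow>
     (\<forall>i\<le>3. in_subring tvars (P i)) \<and> P 0 \<noteq> (\<lambda>_. 0) \<and>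
     coprime_family {P 0, P 1, P 2, P 3} \<and>
     irreducible_poly f \<and> depends_only yvars f \<and>
     (\<forall>a. P 0 a \<noteq> 0 \<longrightarrow> f (at_P P a) = 0) \<and>
     (\<exists>A0 A g. in_subring tvars A0 \<and> A0 \<noteq> (\<lambda>_. 0) \<and>
        (\<forall>i\<in>{1,2,3}. in_subring tvars (A i) \<and>
            (\<forall>a. A i a * (P 0 a)^4 = A0 a * crossQ P i a)) \<and>
        is_gcd g {A 1, A 2, A 3} \<and> g \<noteq> (\<lambda>_. 0) \<and>
        (\<forall>i\<in>{1,2,3}. in_subring tvars (n i) \<and> (\<forall>a. n i a * g a = A i a))) \<and>
     in_subring tvars \<beta> \<and> \<beta> \<noteq> (\<lambda>_. 0) \<and> coprime_family {\<beta>, P 0} \<and>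
     (\<forall>i\<in>{1,2,3}. \<forall>a. P 0 a \<noteq> 0 \<longrightarrow>
        pd (xv i) f (at_P P a) * (P 0 a)^\<mu> = \<beta> a * n i a)"

definition hP :: "(nat \<Rightarrow> pf) \<Rightarrow> pf" where
  "hP n = (\<lambda>a. (n 1 a)^2 + (n 2 a)^2 + (n 3 a)^2)"

definition bP :: "(nat \<Rightarrow> pf) \<Rightarrow> pf" where
  "bP P = (\<lambda>a. (\<Sum>i\<in>{1..3::nat}. (P 0 a * a (xv i) - P i a)^2) - (a Vd)^2 * (P 0 a)^2)"

definition nuP :: "(nat \<Rightarrow> pf) \<Rightarrow> (nat \<Rightarrow> pf) \<Rightarrow> nat \<Rightarrow> nat \<Rightarrow> pf" where
  "nuP P n i j = (\<lambda>a. n i a * (P 0 a * a (xv j) - P j a) - n j a * (P 0 a * a (xv i) - P i a))"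

definition wP :: "(nat \<Rightarrow> pf) \<Rightarrow> (nat \<Rightarrow> pf) \<Rightarrow> pf \<Rightarrow> pf" where
  "wP P n \<beta> = (\<lambda>a. a Vr * P 0 a * \<beta> a * hP n a - 1)"

definition ellP :: "nat \<Rightarrow> pf" where
  "ellP i = (\<lambda>a. a (xv i) - a (kv i) * a Vl)"

definition I2_gens :: "(nat \<Rightarrow> pf) \<Rightarrow> (nat \<Rightarrow> pf) \<Rightarrow> pf \<Rightarrow> pf list" where
  "I2_gens P n \<beta> = [bP P, nuP P n 1 2, nuP P n 1 3, nuP P n 2 3, wP P n \<beta>, ellP 1, ellP 2, ellP 3]"

definition s0 :: "(nat \<Rightarrow> pf) \<Rightarrow> (nat \<Rightarrow> pf) \<Rightarrow> pf" where
  "s0 P n = (\<lambda>a. a Vk1 * (P 2 a * n 3 a - P 3 a * n 2 a) - a Vk2 * (P 1 a * n 3 a - P 3 a * n 1 a)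
                 + a Vk3 * (P 1 a * n 2 a - P 2 a * n 1 a))"

definition s1 :: "(nat \<Rightarrow> pf) \<Rightarrow> (nat \<Rightarrow> pf) \<Rightarrow> pf" where
  "s1 P n = (\<lambda>a. hP n a * (a Vk2 * P 3 a - a Vk3 * P 2 a)^2
                 - (a Vd)^2 * (P 0 a)^2 * (a Vk2 * n 3 a - a Vk3 * n 2 a)^2)"

definition s2 :: "(nat \<Rightarrow> pf) \<Rightarrow> (nat \<Rightarrow> pf) \<Rightarrow> pf" where
  "s2 P n = (\<lambda>a. hP n a * (a Vk1 * P 3 a - a Vk3 * P 1 a)^2
                 - (a Vd)^2 * (P 0 a)^2 * (a Vk1 * n 3 a - a Vk3 * n 1 a)^2)"

definition s3 :: "(nat \<Rightarrow> pf) \<Rightarrow> (nat \<Rightarrow> pf) \<Rightarrow> pf" where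
  "s3 P n = (\<lambda>a. hP n a * (a Vk1 * P 2 a - a Vk2 * P 1 a)^2
                 - (a Vd)^2 * (P 0 a)^2 * (a Vk1 * n 2 a - a Vk2 * n 1 a)^2)"

definition dktvars :: "var set" where "dktvars = {Vd, Vk1, Vk2, Vk3, Vt1, Vt2}"

end

theory Submission
  imports Defs
begin

text \<open>
  Write X_i = P0 x_i - P_i. Modulo the generators nu_(i,j) the vector X is
  parallel to n, modulo b its squared length is d^2 P0^2, and modulo the lines ell_i
  we have x = l k. Hence for every coefficient vector A orthogonal to k
  (so that A.x vanishes modulo the ell_i) the polynomial
      h (A.P)^2 - d^2 P0^2 (A.n)^2
  lies in the ideal I_2^P; this is an explicit polynomial identity over any integral domain.
  Taking A = e_i x k gives s_1, s_2, s_3, and s_0 is an analogous explicit combination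
  of the nu_(i,j) and ell_i.
\<close>

text \<open>The central identity: for A orthogonal to k, h (A.P)^2 - d^2 P0^2 (A.n)^2 is an explicit
  combination of b, the three nu_(i,j) and the three ell_i.\<close>
lemma orthogonal_combination_identity:
  fixes P0 P1 P2 P3 n1 n2 n3 x1 x2 x3 k1 k2 k3 l d A1 A2 A3 :: "'a::idom"
  assumes orth: "A1 * k1 + A2 * k2 + A3 * k3 = 0"
  defines "X1 \<equiv> P0 * x1 - P1" and "X2 \<equiv> P0 * x2 - P2" and "X3 \<equiv> P0 * x3 - P3"
  defines "m \<equiv> A1 * X1 + A2 * X2 + A3 * X3" and "c \<equiv> A1 * n1 + A2 * n2 + A3 * n3"
    and "u \<equiv> A1 * P1 + A2 * P2 + A3 * P3" and "h \<equiv> n1^2 + n2^2 + n3^2"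
  shows "h * u^2 - d^2 * P0^2 * c^2
       = c^2 * (X1^2 + X2^2 + X3^2 - d^2 * P0^2)
       + (A2 * (n1 * m + c * X1) - A1 * (n2 * m + c * X2)) * (n1 * X2 - n2 * X1)
       + (A3 * (n1 * m + c * X1) - A1 * (n3 * m + c * X3)) * (n1 * X3 - n3 * X1)
       + (A3 * (n2 * m + c * X2) - A2 * (n3 * m + c * X3)) * (n2 * X3 - n3 * X2)
       + h * (u - m) * P0 * A1 * (x1 - k1 * l) + h * (u - m) * P0 * A2 * (x2 - k2 * l)
       + h * (u - m) * P0 * A3 * (x3 - k3 * l)"
  using orth unfolding X1_def X2_def X3_def m_def c_def u_def h_def by algebra

lemma s0_combination_identity:
  fixes P0 P1 P2 P3 n1 n2 n3 x1 x2 x3 k1 k2 k3 l :: "'a::idom"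
  shows "k1 * (P2 * n3 - P3 * n2) - k2 * (P1 * n3 - P3 * n1) + k3 * (P1 * n2 - P2 * n1)
       = k3 * (n1 * (P0 * x2 - P2) - n2 * (P0 * x1 - P1))
       - k2 * (n1 * (P0 * x3 - P3) - n3 * (P0 * x1 - P1))
       + k1 * (n2 * (P0 * x3 - P3) - n3 * (P0 * x2 - P2))
       + P0 * (k3 * n2 - k2 * n3) * (x1 - k1 * l) + P0 * (k1 * n3 - k3 * n1) * (x2 - k2 * l)
       + P0 * (k2 * n1 - k1 * n2) * (x3 - k3 * l)"
  by algebra

lemma mp_diff: "p \<in> mpoly \<Longrightarrow> q \<in> mpoly \<Longrightarrow> (\<lambda>a. p a - q a) \<in> mpoly"
  using mp_add[OF _ mp_mult[OF mp_const[of "-1"]]] by simp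

lemma mp_uminus: "q \<in> mpoly \<Longrightarrow> (\<lambda>a. - q a) \<in> mpoly"
  using mp_diff[OF mp_const[of 0]] by simp

lemma mp_power:
  assumes "p \<in> mpoly"
  shows "(\<lambda>a. p a ^ k) \<in> mpoly"
proof (induction k)
  case 0
  show ?case using mp_const[of 1] by simp
next
  case (Suc k)
  show ?case using mp_mult[OF assms Suc.IH] by simp
qed

lemmas mp_intros = mp_const mp_var mp_add mp_mult mp_diff mp_uminus mp_power

lemma ideal_gen_8:
  assumes "c0 \<in> mpoly" "c1 \<in> mpoly" "c2 \<in> mpoly" "c3 \<in> mpoly"
    "c4 \<in> mpoly" "c5 \<in> mpoly" "c6 \<in> mpoly" "c7 \<in> mpoly"
    and "\<And>a. s a = c0 a * g0 a + c1 a * g1 a + c2 a * g2 a + c3 a * g3 a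
                 + c4 a * g4 a + c5 a * g5 a + c6 a * g6 a + c7 a * g7 a"
  shows "s \<in> ideal_gen [g0, g1, g2, g3, g4, g5, g6, g7]"
  unfolding ideal_gen_def
  using assms by (intro CollectI exI[of _ "[c0, c1, c2, c3, c4, c5, c6, c7]"])
    (auto simp: eval_nat_numeral ac_simps)

lemma ideal_gen_vanishes:
  assumes "s \<in> ideal_gen G" and "\<forall>g\<in>set G. g a = 0"
  shows "s a = 0"
proof -
  from assms(1) obtain cs where "s = (\<lambda>a. \<Sum>i<length G. (cs ! i) a * (G ! i) a)"
    unfolding ideal_gen_def by blast
  moreover have "(G ! i) a = 0" if "i < length G" for i
    using assms(2) nth_mem[OF that] by blast
  ultimately show ?thesis by simp
qed

lemma orthogonal_combination_in_I2:
  assumes A: "A1 \<in> mpoly" "A2 \<in> mpoly" "A3 \<in> mpoly"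
    and orth: "\<And>a. A1 a * a Vk1 + A2 a * a Vk2 + A3 a * a Vk3 = 0"
    and P: "\<And>i. i \<le> 3 \<Longrightarrow> P i \<in> mpoly"
    and n: "\<And>i. i \<in> {1, 2, 3} \<Longrightarrow> n i \<in> mpoly"
  shows "(\<lambda>a. hP n a * (A1 a * P 1 a + A2 a * P 2 a + A3 a * P 3 a)^2
      - (a Vd)^2 * (P 0 a)^2 * (A1 a * n 1 a + A2 a * n 2 a + A3 a * n 3 a)^2)
    \<in> ideal_gen (I2_gens P n \<beta>)"
proof -
  have polys: "P 0 \<in> mpoly" "P 1 \<in> mpoly" "P 2 \<in> mpoly" "P 3 \<in> mpoly"
      "n 1 \<in> mpoly" "n 2 \<in> mpoly" "n 3 \<in> mpoly"
    using P n by simp_all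
  define X where "X i = (\<lambda>a. P 0 a * a (xv i) - P i a)" for i
  define m where "m = (\<lambda>a. A1 a * X 1 a + A2 a * X 2 a + A3 a * X 3 a)"
  define c where "c = (\<lambda>a. A1 a * n 1 a + A2 a * n 2 a + A3 a * n 3 a)"
  define e where "e = (\<lambda>a. hP n a * (A1 a * P 1 a + A2 a * P 2 a + A3 a * P 3 a - m a) * P 0 a)"
  have X_poly: "X i \<in> mpoly" if "i \<le> 3" for i
    unfolding X_def using P[OF that] P[of 0] by (intro mp_intros) simp_all
  have m_poly: "m \<in> mpoly" and c_poly: "c \<in> mpoly"
    unfolding m_def c_def by (intro A polys mp_intros X_poly; simp)+
  have e_poly: "e \<in> mpoly"
    unfolding e_def hP_def by (intro A polys m_poly mp_intros)+
  show ?thesis unfolding I2_gens_def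
  proof (rule ideal_gen_8[of "\<lambda>a. (c a)^2"
      "\<lambda>a. A2 a * (n 1 a * m a + c a * X 1 a) - A1 a * (n 2 a * m a + c a * X 2 a)"
      "\<lambda>a. A3 a * (n 1 a * m a + c a * X 1 a) - A1 a * (n 3 a * m a + c a * X 3 a)"
      "\<lambda>a. A3 a * (n 2 a * m a + c a * X 2 a) - A2 a * (n 3 a * m a + c a * X 3 a)"
      "\<lambda>_. 0" "\<lambda>a. e a * A1 a" "\<lambda>a. e a * A2 a" "\<lambda>a. e a * A3 a"])
    fix a
    show "hP n a * (A1 a * P 1 a + A2 a * P 2 a + A3 a * P 3 a)^2
        - (a Vd)^2 * (P 0 a)^2 * (A1 a * n 1 a + A2 a * n 2 a + A3 a * n 3 a)^2
      = (c a)^2 * bP P a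
      + (A2 a * (n 1 a * m a + c a * X 1 a) - A1 a * (n 2 a * m a + c a * X 2 a)) * nuP P n 1 2 a
      + (A3 a * (n 1 a * m a + c a * X 1 a) - A1 a * (n 3 a * m a + c a * X 3 a)) * nuP P n 1 3 a
      + (A3 a * (n 2 a * m a + c a * X 2 a) - A2 a * (n 3 a * m a + c a * X 3 a)) * nuP P n 2 3 a
      + 0 * wP P n \<beta> a + e a * A1 a * ellP 1 a + e a * A2 a * ellP 2 a + e a * A3 a * ellP 3 a"
      using orthogonal_combination_identity[OF orth[of a], where ?P0.0 = "P 0 a"
          and ?P1.0 = "P 1 a" and ?P2.0 = "P 2 a" and ?P3.0 = "P 3 a"
          and ?n1.0 = "n 1 a" and ?n2.0 = "n 2 a" and ?n3.0 = "n 3 a"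
          and ?x1.0 = "a Vx1" and ?x2.0 = "a Vx2" and ?x3.0 = "a Vx3" and l = "a Vl" and d = "a Vd"]
      unfolding bP_def nuP_def ellP_def hP_def e_def m_def c_def X_def
      by (simp add: xv_def kv_def eval_nat_numeral)
  qed (intro A polys mp_intros m_poly c_poly e_poly X_poly; simp)+
qed

lemma s0_in_I2:
  assumes P: "\<And>i. i \<le> 3 \<Longrightarrow> P i \<in> mpoly"
    and n: "\<And>i. i \<in> {1, 2, 3} \<Longrightarrow> n i \<in> mpoly"
  shows "s0 P n \<in> ideal_gen (I2_gens P n \<beta>)"
  unfolding I2_gens_def
proof (rule ideal_gen_8[of "\<lambda>_. 0" "\<lambda>a. a Vk3" "\<lambda>a. - a Vk2" "\<lambda>a. a Vk1" "\<lambda>_. 0"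
    "\<lambda>a. P 0 a * (a Vk3 * n 2 a - a Vk2 * n 3 a)"
    "\<lambda>a. P 0 a * (a Vk1 * n 3 a - a Vk3 * n 1 a)"
    "\<lambda>a. P 0 a * (a Vk2 * n 1 a - a Vk1 * n 2 a)"])
  fix a
  show "s0 P n a = 0 * bP P a + a Vk3 * nuP P n 1 2 a + - a Vk2 * nuP P n 1 3 a
      + a Vk1 * nuP P n 2 3 a + 0 * wP P n \<beta> a
      + P 0 a * (a Vk3 * n 2 a - a Vk2 * n 3 a) * ellP 1 a
      + P 0 a * (a Vk1 * n 3 a - a Vk3 * n 1 a) * ellP 2 a
      + P 0 a * (a Vk2 * n 1 a - a Vk1 * n 2 a) * ellP 3 a"
    using s0_combination_identity[where ?P0.0 = "P 0 a" and ?P1.0 = "P 1 a" and ?P2.0 = "P 2 a"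
        and ?P3.0 = "P 3 a" and ?n1.0 = "n 1 a" and ?n2.0 = "n 2 a" and ?n3.0 = "n 3 a"
        and ?x1.0 = "a Vx1" and ?x2.0 = "a Vx2" and ?x3.0 = "a Vx3"
        and ?k1.0 = "a Vk1" and ?k2.0 = "a Vk2" and ?k3.0 = "a Vk3" and l = "a Vl"]
    unfolding s0_def nuP_def ellP_def by (simp add: xv_def kv_def)
qed (intro P n mp_intros; simp)+

text \<open>s_1, s_2, s_3 are the instances A = e_i x k of the orthogonal combinations.\<close>
lemma s1_s2_s3_in_I2:
  assumes P: "\<And>i. i \<le> 3 \<Longrightarrow> P i \<in> mpoly"
    and n: "\<And>i. i \<in> {1, 2, 3} \<Longrightarrow> n i \<in> mpoly"
  shows "s1 P n \<in> ideal_gen (I2_gens P n \<beta>)" and "s2 P n \<in> ideal_gen (I2_gens P n \<beta>)"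
    and "s3 P n \<in> ideal_gen (I2_gens P n \<beta>)"
proof -
  note cross_instance = orthogonal_combination_in_I2[OF _ _ _ _ P n]
  have "s1 P n = (\<lambda>a. hP n a * (0 * P 1 a + - a Vk3 * P 2 a + a Vk2 * P 3 a)^2
      - (a Vd)^2 * (P 0 a)^2 * (0 * n 1 a + - a Vk3 * n 2 a + a Vk2 * n 3 a)^2)"
    unfolding s1_def by (rule ext) (simp add: algebra_simps)
  also have "\<dots> \<in> ideal_gen (I2_gens P n \<beta>)"
    by (rule cross_instance) (intro mp_intros | simp add: algebra_simps)+
  finally show "s1 P n \<in> ideal_gen (I2_gens P n \<beta>)" .
  have "s2 P n = (\<lambda>a. hP n a * (- a Vk3 * P 1 a + 0 * P 2 a + a Vk1 * P 3 a)^2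
      - (a Vd)^2 * (P 0 a)^2 * (- a Vk3 * n 1 a + 0 * n 2 a + a Vk1 * n 3 a)^2)"
    unfolding s2_def by (rule ext) (simp add: algebra_simps)
  also have "\<dots> \<in> ideal_gen (I2_gens P n \<beta>)"
    by (rule cross_instance) (intro mp_intros | simp add: algebra_simps)+
  finally show "s2 P n \<in> ideal_gen (I2_gens P n \<beta>)" .
  have "s3 P n = (\<lambda>a. hP n a * (- a Vk2 * P 1 a + a Vk1 * P 2 a + 0 * P 3 a)^2
      - (a Vd)^2 * (P 0 a)^2 * (- a Vk2 * n 1 a + a Vk1 * n 2 a + 0 * n 3 a)^2)"
    unfolding s3_def by (rule ext) (simp add: algebra_simps)
  also have "\<dots> \<in> ideal_gen (I2_gens P n \<beta>)"
    by (rule cross_instance) (intro mp_intros | simp add: algebra_simps)+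
  finally show "s3 P n \<in> ideal_gen (I2_gens P n \<beta>)" .
qed

lemma setting_polynomial_data:
  assumes "setting f P n \<beta> \<mu>"
  shows "\<And>i. i \<le> 3 \<Longrightarrow> in_subring tvars (P i)"
    and "\<And>i. i \<in> {1, 2, 3} \<Longrightarrow> in_subring tvars (n i)"
proof -
  have "(\<forall>i\<le>3. in_subring tvars (P i)) \<and> (\<forall>i\<in>{1, 2, 3}. in_subring tvars (n i))"
    using assms unfolding setting_def by (elim conjE exE) simp
  then show "\<And>i. i \<le> 3 \<Longrightarrow> in_subring tvars (P i)"
    and "\<And>i. i \<in> {1, 2, 3} \<Longrightarrow> in_subring tvars (n i)"
    by auto
qed

lemma agree_on_dktvars:
  assumes "depends_only tvars p" and "\<forall>v\<in>dktvars. a v = b v"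
  shows "p a = p b"
proof -
  have "\<forall>v\<in>tvars. a v = b v"
    using assms(2) unfolding tvars_def dktvars_def by simp
  then show ?thesis
    using assms(1) unfolding depends_only_def by blast
qed

lemma s_in_dkt_subring:
  assumes P: "\<And>i. i \<le> 3 \<Longrightarrow> in_subring tvars (P i)"
    and n: "\<And>i. i \<in> {1, 2, 3} \<Longrightarrow> in_subring tvars (n i)"
    and s: "s \<in> {s0 P n, s1 P n, s2 P n, s3 P n}"
  shows "in_subring dktvars s"
proof -
  have polys: "P 0 \<in> mpoly" "P 1 \<in> mpoly" "P 2 \<in> mpoly" "P 3 \<in> mpoly"
      "n 1 \<in> mpoly" "n 2 \<in> mpoly" "n 3 \<in> mpoly"
    using P n unfolding in_subring_def by simp_all
  have "s \<in> mpoly"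
    using s unfolding s0_def s1_def s2_def s3_def hP_def
    by (elim insertE emptyE; hypsubst; intro polys mp_intros)
  moreover have "depends_only dktvars s"
    unfolding depends_only_def
  proof (intro allI impI)
    fix a b :: "var \<Rightarrow> complex"
    assume agree: "\<forall>v\<in>dktvars. a v = b v"
    have "P i a = P i b" if "i \<le> 3" for i
      using P[OF that] agree_on_dktvars[OF _ agree] unfolding in_subring_def by blast
    moreover have "n i a = n i b" if "i \<in> {1, 2, 3}" for i
      using n[OF that] agree_on_dktvars[OF _ agree] unfolding in_subring_def by blast
    moreover have "a v = b v" if "v \<in> {Vd, Vk1, Vk2, Vk3}" for v
      using agree that unfolding dktvars_def by auto
    ultimately show "s a = s b"
      using s unfolding s0_def s1_def s2_def s3_def hP_def
      by (elim insertE emptyE; hypsubst; simp)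
  qed
  ultimately show ?thesis unfolding in_subring_def by blast
qed

theorem mainTheorem14:
  fixes f \<beta> :: pf and P n :: "nat \<Rightarrow> pf" and \<mu> :: nat
  assumes "setting f P n \<beta> \<mu>"
  shows "(\<forall>s\<in>{s0 P n, s1 P n, s2 P n, s3 P n}.
            s \<in> ideal_gen (I2_gens P n \<beta>) \<and> in_subring dktvars s)
       \<and> (\<forall>a. (\<forall>g\<in>set (I2_gens P n \<beta>). g a = 0) \<longrightarrow>
              s1 P n a = 0 \<and> s2 P n a = 0 \<and> s3 P n a = 0)"
proof -
  note data = setting_polynomial_data[OF assms]
  have P: "P i \<in> mpoly" if "i \<le> 3" for i
    using data(1)[OF that] by (simp add: in_subring_def)
  have n: "n i \<in> mpoly" if "i \<in> {1, 2, 3}" for i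
    using data(2)[OF that] by (simp add: in_subring_def)
  have in_I2: "s0 P n \<in> ideal_gen (I2_gens P n \<beta>)" "s1 P n \<in> ideal_gen (I2_gens P n \<beta>)"
      "s2 P n \<in> ideal_gen (I2_gens P n \<beta>)" "s3 P n \<in> ideal_gen (I2_gens P n \<beta>)"
    using P n by (blast intro: s0_in_I2 s1_s2_s3_in_I2)+
  have in_subring: "in_subring dktvars s" if "s \<in> {s0 P n, s1 P n, s2 P n, s3 P n}" for s
    using data that by (blast intro: s_in_dkt_subring)
  show ?thesis
  proof (intro conjI ballI allI impI)
    fix s
    assume "s \<in> {s0 P n, s1 P n, s2 P n, s3 P n}"
    then show "s \<in> ideal_gen (I2_gens P n \<beta>)" and "in_subring dktvars s"
      using in_I2 in_subring by blast+
  next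
    fix a
    assume "\<forall>g\<in>set (I2_gens P n \<beta>). g a = 0"
    then show "s1 P n a = 0" and "s2 P n a = 0" and "s3 P n a = 0"
      using ideal_gen_vanishes in_I2 by blast+
  qed
qed

end
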